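(* For $\nu>0$ small let $p_{x1}=p_{01}=p_{0x}=-2\cosh(2\pi\nu)$, let $\mu=\mu(\nu)$ be real, determined by $$\mu=-\frac12+\frac1{2\pi}\arg\Big(c_1(\nu)-\frac i2\sqrt{c_2(\nu)}\Big),\qquad -\pi\le\arg(\cdot)\le0,$$ and let $d=d(\nu)$ be the corresponding integration constant (branch with $d\to0$ as $\nu\to0$). Let $$y_1(x)=\frac{(2\mu-1+2i\nu)^2}{16\nu^2}e^{-2id}x^{-2i\nu}-\frac{(2\mu-1)^2-4\nu^2}{8\nu^2}+\frac{(2\mu-1-2i\nu)^2}{16\nu^2}e^{2id}x^{2i\nu}.$$ Then as $\nu\to0$, $\mu\to-\frac12$, and for every fixed $x\ne0$ (with $|\arg x|<\pi$) the limit $\lim_{\nu\to0}y_1(x)=P_1^{(-1/2)}(\ln x)$ exists, where $$P_1^{(-1/2)}(\ln x)=-(\ln x+d_1+2)(\ln x+d_1),\qquad d_1=\frac{i\pi}2-4\ln2-\frac{\pi\sqrt3}2.$$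
   Context: $c_1(\nu)=2+3\cosh(2\pi\nu)-\cosh(3\pi\nu)-3\cosh(\pi\nu)$, $c_2(\nu)=96\cosh(\pi\nu)+52\cosh(3\pi\nu)+12\cosh(5\pi\nu)-50-78\cosh(2\pi\nu)-30\cosh(4\pi\nu)-2\cosh(6\pi\nu)$ (nonnegative for small $\nu$, positive square root); this $\mu$ satisfies $\cos(2\pi\mu)=-c_1(\nu)$, i.e. the relation $3p_{0x}^2+p_{0x}^3-12p_{0x}(1+\cos 2\pi\mu)+4\cos^2 2\pi\mu+16\cos 2\pi\mu+8=0$. The integration constant is $$d=\frac i2\ln\Big\{-\frac{4\cdot16^{2i\nu}\Gamma(\frac32-\mu-i\nu)^2\Gamma(\mu+\frac12-i\nu)^2}{(2\nu+i(1-2\mu))^2\nu^2\sinh(2\pi\nu)^2\Gamma(-i\nu)^4}\Big[\tfrac12(e^{2\pi\nu}p_{x1}-p_{01})\sinh(2\pi\nu)+(\cos(2\pi\mu)+1)(e^{2\pi\nu}+1)\Big]\Big\}.$$ $y_1$ is the leading term of the branch $\frac1{y(x)}=\sum_{n\ge1}x^{n-1}\sum_{m=-n}^nA_{nm}(\nu,\mu)e^{2imd}x^{2im\nu}$ of the Painlevé VI equation $PVI_\mu$ (parameters $\alpha=(2\mu-1)^2/2$, $\beta=\gamma=0$, $\delta=1/2$) associated with these monodromy data; $x^{\pm2i\nu}=e^{\pm2i\nu\log x}$. *)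

theory Defs
  imports "HOL-Analysis.Analysis"
begin

definition c1 :: "real \<Rightarrow> real" where
  "c1 \<nu> = 2 + 3 * cosh (2*pi*\<nu>) - cosh (3*pi*\<nu>) - 3 * cosh (pi*\<nu>)"

definition c2 :: "real \<Rightarrow> real" where
  "c2 \<nu> = 96 * cosh (pi*\<nu>) + 52 * cosh (3*pi*\<nu>) + 12 * cosh (5*pi*\<nu>) - 50
           - 78 * cosh (2*pi*\<nu>) - 30 * cosh (4*pi*\<nu>) - 2 * cosh (6*pi*\<nu>)"

definition arg_low :: "complex \<Rightarrow> real" where
  "arg_low z = (if Arg z > 0 then Arg z - 2*pi else Arg z)"

definition mu :: "real \<Rightarrow> real" where
  "mu \<nu> = -1/2 + arg_low (complex_of_real (c1 \<nu>) - \<i>/2 * complex_of_real (sqrt (c2 \<nu>))) / (2*pi)"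

text \<open>Common value of the monodromy data p_x1 = p_01 = p_0x.\<close>
definition pp :: "real \<Rightarrow> real" where
  "pp \<nu> = - 2 * cosh (2*pi*\<nu>)"

text \<open>Integration constant d (principal logarithm: y1 only depends on exp(2 i d)).\<close>
definition dconst :: "real \<Rightarrow> complex" where
  "dconst \<nu> = (let m = complex_of_real (mu \<nu>); v = complex_of_real \<nu> in
     \<i>/2 * Ln (
       - (4 * exp (2*\<i> * v * Ln (16::complex)) * Gamma (3/2 - m - \<i> * v)^2 * Gamma (m + 1/2 - \<i> * v)^2)
         / ((2* v + \<i> * (1 - 2*m))^2 * v^2 * complex_of_real (sinh (2*pi*\<nu>))^2 * Gamma (- \<i> * v)^4)
       * complex_of_real (1/2 * (exp (2*pi*\<nu>) * pp \<nu> - pp \<nu>) * sinh (2*pi*\<nu>)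
            + (cos (2*pi*mu \<nu>) + 1) * (exp (2*pi*\<nu>) + 1))))"

definition y1 :: "real \<Rightarrow> complex \<Rightarrow> complex" where
  "y1 \<nu> x = (let m = complex_of_real (mu \<nu>); v = complex_of_real \<nu>; d = dconst \<nu> in
     (2*m - 1 + 2*\<i> * v)^2 / (16* v^2) * exp (-2*\<i> * d) * exp (-2*\<i> * v * Ln x)
     - ((2*m - 1)^2 - 4* v^2) / (8* v^2)
     + (2*m - 1 - 2*\<i> * v)^2 / (16* v^2) * exp (2*\<i> * d) * exp (2*\<i> * v * Ln x))"

definition d1 :: complex where
  "d1 = \<i> * pi/2 - 4 * ln 2 - pi * sqrt 3 / 2"

definition P1 :: "complex \<Rightarrow> complex" where
  "P1 x = - (Ln x + d1 + 2) * (Ln x + d1)"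

end

theory Submission
  imports Defs "HOL-Real_Asymp.Real_Asymp"
begin

text \<open>
  The cosh expressions give mu = -1/2 + eps with eps ~ -(sqrt 3 pi / 2) nu^2. Let Z = exp (-2 i d)
  be the argument of the logarithm defining d. Shifting the Gamma arguments by one with
  Gamma (z + 1) = z Gamma z splits Z into factors of the form 1 + a nu + o(nu):
  16^(2 i nu) gives a = 2 i ln 16; the Gamma quotient gives a = 0, since the derivatives Gamma'(1)
  cancel; the monodromy bracket gives a = pi, the cos (2 pi mu) + 1 part being O(nu^4); and the
  leftover (1 + i eps / nu)^(-2) gives a = i sqrt 3 pi. Hence Z = 1 - 2 i d1 nu + o(nu).
  Finally y1 = 1 + ((p E - q) / nu)^2 / (16 E) with E = Z x^(-2 i nu), p, q --> -2 and
  p - q = 4 i nu, so y1 --> 1 + (4 i - 2 (-2 i d1 - 2 i ln x))^2 / 16 = -(ln x + d1 + 2) (ln x + d1).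
\<close>

lemma cosh_sinh_real_exp:
  "cosh (x::real) = (exp x + exp (-x)) / 2" "sinh (x::real) = (exp x - exp (-x)) / 2"
  by (simp_all add: cosh_def sinh_def)

lemma abs_one_minus_cos_le: "\<bar>1 - cos (x::real)\<bar> \<le> x^2 / 2"
proof -
  have "cos x = 1 - 2 * (sin (x/2))^2" using cos_double_sin[of "x/2"] by simp
  moreover have "(sin (x/2))^2 \<le> (x/2)^2"
    by (metis abs_ge_zero abs_sin_x_le_abs_x power2_abs power_mono)
  ultimately show ?thesis by (simp add: power2_eq_square)
qed

lemma of_real_tendsto_0_at_right: "((\<lambda>t. complex_of_real t) \<longlongrightarrow> 0) (at_right 0)"
  using tendsto_of_real[OF tendsto_ident_at[of "0::real" "{0<..}"]] by simp

lemma not_nonpos_Int_if_Im_nonzero: "Im z \<noteq> 0 \<Longrightarrow> z \<notin> \<int>\<^sub>\<le>\<^sub>0"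
  by (auto elim!: nonpos_Ints_cases')


section \<open>The exponent \<mu>\<close>

definition mu_offset :: "real \<Rightarrow> real" where
  "mu_offset \<nu> = mu \<nu> + 1/2"

lemma c1_tendsto_1: "(c1 \<longlongrightarrow> 1) (at_right 0)"
  unfolding c1_def cosh_sinh_real_exp by real_asymp

lemma mu_offset_eventually_eq_arctan:
  "\<forall>\<^sub>F \<nu> in at_right 0. mu_offset \<nu> = - arctan (sqrt (c2 \<nu>) / (2 * c1 \<nu>)) / (2*pi)"
proof -
  have "\<forall>\<^sub>F \<nu> in at_right 0. c1 \<nu> > 0"
    using c1_tendsto_1 by (rule order_tendstoD) simp
  moreover have "\<forall>\<^sub>F \<nu> in at_right 0. c2 \<nu> > 0"
    unfolding c2_def cosh_sinh_real_exp by real_asymp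
  ultimately show ?thesis
  proof eventually_elim
    case (elim \<nu>)
    define z where "z = complex_of_real (c1 \<nu>) - \<i>/2 * complex_of_real (sqrt (c2 \<nu>))"
    have "Arg z = arctan (Im z / Re z)"
      using elim by (intro arg_conv_arctan) (simp add: z_def)
    also have "\<dots> = - arctan (sqrt (c2 \<nu>) / (2 * c1 \<nu>))"
      by (simp add: z_def arctan_minus)
    finally have "Arg z = - arctan (sqrt (c2 \<nu>) / (2 * c1 \<nu>))" .
    moreover have "arctan (sqrt (c2 \<nu>) / (2 * c1 \<nu>)) \<ge> 0"
      using elim by (simp add: divide_nonneg_pos)
    ultimately show ?case by (simp add: mu_offset_def mu_def arg_low_def z_def)
  qed
qed

lemma mu_offset_asymp: "((\<lambda>\<nu>. mu_offset \<nu> / \<nu>^2) \<longlongrightarrow> - (sqrt 3 * pi / 2)) (at_right 0)"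
proof -
  have "12 * (pi * (pi * (pi * pi))) = (2 * sqrt 3 * pi^2)^2"
    by (simp add: power2_eq_square power_mult_distrib algebra_simps)
  then have "(12 * (pi * (pi * (pi * pi)))) powr (1/2) = 2 * sqrt 3 * pi^2"
    by (simp add: powr_half_sqrt)
  moreover have "((\<lambda>\<nu>. arctan (sqrt (c2 \<nu>) / (2 * c1 \<nu>)) / \<nu>^2)
      \<longlongrightarrow> (12 * (pi * (pi * (pi * pi)))) powr (1/2) / 2) (at_right 0)"
    unfolding c1_def c2_def cosh_sinh_real_exp by real_asymp
  ultimately have "((\<lambda>\<nu>. arctan (sqrt (c2 \<nu>) / (2 * c1 \<nu>)) / \<nu>^2) \<longlongrightarrow> sqrt 3 * pi^2) (at_right 0)"
    by simp
  then have "((\<lambda>\<nu>. - (arctan (sqrt (c2 \<nu>) / (2 * c1 \<nu>)) / \<nu>^2) / (2*pi))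
      \<longlongrightarrow> - (sqrt 3 * pi^2) / (2*pi)) (at_right 0)"
    by (intro tendsto_intros) auto
  also have "- (sqrt 3 * pi^2) / (2*pi) = - (sqrt 3 * pi / 2)"
    by (simp add: power2_eq_square)
  finally show ?thesis
    by (rule Lim_transform_eventually)
      (use mu_offset_eventually_eq_arctan in \<open>eventually_elim, simp\<close>)
qed

lemma mu_offset_over_nu_tendsto_0: "((\<lambda>\<nu>. mu_offset \<nu> / \<nu>) \<longlongrightarrow> 0) (at_right 0)"
proof -
  have "((\<lambda>\<nu>. mu_offset \<nu> / \<nu>^2 * \<nu>) \<longlongrightarrow> - (sqrt 3 * pi / 2) * 0) (at_right 0)"
    by (intro tendsto_intros mu_offset_asymp)
  then have "((\<lambda>\<nu>. mu_offset \<nu> / \<nu>^2 * \<nu>) \<longlongrightarrow> 0) (at_right 0)"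
    by (simp only: mult_zero_right)
  then show ?thesis
    by (rule Lim_transform_eventually)
      (use eventually_at_right_less in \<open>eventually_elim, simp add: power2_eq_square\<close>)
qed

lemma mu_tendsto: "(mu \<longlongrightarrow> -1/2) (at_right 0)"
proof -
  have "((\<lambda>\<nu>. mu_offset \<nu> / \<nu> * \<nu>) \<longlongrightarrow> 0 * 0) (at_right 0)"
    by (intro tendsto_intros mu_offset_over_nu_tendsto_0)
  then have "((\<lambda>\<nu>. mu_offset \<nu> / \<nu> * \<nu>) \<longlongrightarrow> 0) (at_right 0)"
    by (simp only: mult_zero_right)
  then have "(mu_offset \<longlongrightarrow> 0) (at_right 0)"
    by (rule Lim_transform_eventually) (use eventually_at_right_less in \<open>eventually_elim, simp\<close>)
  then have "((\<lambda>\<nu>. mu_offset \<nu> - 1/2) \<longlongrightarrow> 0 - 1/2) (at_right 0)"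
    by (intro tendsto_intros)
  then show ?thesis
    by (simp add: mu_offset_def)
qed


section \<open>Functions of the form 1 + a t + o(t)\<close>

definition expands_from_one :: "(real \<Rightarrow> complex) \<Rightarrow> complex \<Rightarrow> bool" where
  "expands_from_one f a \<longleftrightarrow> ((\<lambda>t. (f t - 1) / complex_of_real t) \<longlongrightarrow> a) (at_right 0)"

lemma expands_from_one_tendsto:
  assumes "expands_from_one f a"
  shows "(f \<longlongrightarrow> 1) (at_right 0)"
proof -
  have "((\<lambda>t. complex_of_real t * ((f t - 1) / complex_of_real t) + 1) \<longlongrightarrow> 0 * a + 1) (at_right 0)"
    using assms unfolding expands_from_one_def by (intro tendsto_intros of_real_tendsto_0_at_right)
  then have "((\<lambda>t. complex_of_real t * ((f t - 1) / complex_of_real t) + 1) \<longlongrightarrow> 1) (at_right 0)"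
    by (simp only: mult_zero_left add_0)
  then show ?thesis
    by (rule Lim_transform_eventually)
      (use eventually_at_right_less in \<open>eventually_elim, simp\<close>)
qed

lemma expands_from_one_eventually_nonzero:
  "expands_from_one f a \<Longrightarrow> \<forall>\<^sub>F t in at_right 0. f t \<noteq> 0"
  using tendsto_imp_eventually_ne[OF expands_from_one_tendsto] by simp

lemma expands_from_one_cong:
  assumes "expands_from_one f a" "\<forall>\<^sub>F t in at_right 0. f t = g t" "a = b"
  shows "expands_from_one g b"
  using assms unfolding expands_from_one_def
  by (rule_tac Lim_transform_eventually) (auto elim: eventually_mono)

lemma expands_from_one_mult:
  assumes f: "expands_from_one f a" and g: "expands_from_one g b"
  shows "expands_from_one (\<lambda>t. f t * g t) (a + b)"
proof -
  have "((\<lambda>t. f t * ((g t - 1) / complex_of_real t) + (f t - 1) / complex_of_real t) \<longlongrightarrow> 1 * b + a)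
      (at_right 0)"
    using f g expands_from_one_tendsto[OF f] unfolding expands_from_one_def by (intro tendsto_intros)
  moreover have "f t * ((g t - 1) / complex_of_real t) + (f t - 1) / complex_of_real t
      = (f t * g t - 1) / complex_of_real t" for t
    by (simp add: add_divide_distrib[symmetric] algebra_simps)
  ultimately show ?thesis unfolding expands_from_one_def by (simp add: add.commute)
qed

lemma expands_from_one_power2:
  "expands_from_one f a \<Longrightarrow> expands_from_one (\<lambda>t. (f t)^2) (2 * a)"
  using expands_from_one_mult[of f a f a] by (simp only: power2_eq_square mult_2)

lemma expands_from_one_inverse:
  assumes f: "expands_from_one f a"
  shows "expands_from_one (\<lambda>t. inverse (f t)) (- a)"
proof -
  have "((\<lambda>t. - ((f t - 1) / complex_of_real t) * inverse (f t)) \<longlongrightarrow> - a * inverse 1) (at_right 0)"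
    using f expands_from_one_tendsto[OF f] unfolding expands_from_one_def
    by (intro tendsto_intros) auto
  then have "((\<lambda>t. - ((f t - 1) / complex_of_real t) * inverse (f t)) \<longlongrightarrow> - a) (at_right 0)"
    by (simp only: inverse_1 mult_1_right)
  then show ?thesis unfolding expands_from_one_def
    by (rule Lim_transform_eventually)
      (use expands_from_one_eventually_nonzero[OF f] in
        \<open>eventually_elim, simp add: field_simps minus_divide_left\<close>)
qed

lemma expands_from_one_of_real:
  assumes "((\<lambda>t. (g t - 1) / t) \<longlongrightarrow> a) (at_right 0)"
  shows "expands_from_one (\<lambda>t. complex_of_real (g t)) (complex_of_real a)"
  unfolding expands_from_one_def
  by (rule Lim_transform_eventually[OF tendsto_of_real[OF assms]]) auto

text \<open>
  The difference quotient of h is extended continuously to 0, so no assumption that w avoids 0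
  is needed.
\<close>
lemma expands_from_one_comp:
  assumes h: "(h has_field_derivative h') (at 0)" "h 0 = 1"
    and w: "((\<lambda>t. w t / complex_of_real t) \<longlongrightarrow> c) (at_right 0)"
  shows "expands_from_one (\<lambda>t. h (w t)) (h' * c)"
proof -
  have "((\<lambda>t. complex_of_real t * (w t / complex_of_real t)) \<longlongrightarrow> 0 * c) (at_right 0)"
    by (intro tendsto_intros of_real_tendsto_0_at_right w)
  then have "((\<lambda>t. complex_of_real t * (w t / complex_of_real t)) \<longlongrightarrow> 0) (at_right 0)"
    by (simp only: mult_zero_left)
  then have w0: "(w \<longlongrightarrow> 0) (at_right 0)"
    by (rule Lim_transform_eventually)
      (use eventually_at_right_less in \<open>eventually_elim, simp\<close>)
  define q where "q z = (if z = 0 then h' else (h z - 1) / z)" for z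
  have "((\<lambda>z. (h z - h 0) / (z - 0)) \<longlongrightarrow> h') (at 0)"
    using h(1) by (simp add: has_field_derivative_iff)
  then have "(q \<longlongrightarrow> h') (at 0)"
    by (rule Lim_transform_eventually) (auto simp: eventually_at_filter q_def h(2))
  then have "isCont q 0"
    by (simp add: isCont_def q_def)
  then have "((\<lambda>t. q (w t) * (w t / complex_of_real t)) \<longlongrightarrow> q 0 * c) (at_right 0)"
    by (intro tendsto_intros isCont_tendsto_compose[OF _ w0] w)
  moreover have "q (w t) * (w t / complex_of_real t) = (h (w t) - 1) / complex_of_real t" for t
    by (auto simp: q_def h(2))
  moreover have "q 0 = h'"
    by (simp add: q_def)
  ultimately show ?thesis
    unfolding expands_from_one_def by (simp only:)
qed

lemma expands_from_one_exp_linear: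
  "expands_from_one (\<lambda>t. exp (a * complex_of_real t * b)) (a * b)"
proof -
  have "((\<lambda>t. a * complex_of_real t * b / complex_of_real t) \<longlongrightarrow> a * b) (at_right 0)"
    by (rule Lim_transform_eventually[OF tendsto_const])
      (use eventually_at_right_less in \<open>eventually_elim, simp\<close>)
  then show ?thesis
    using expands_from_one_comp[OF DERIV_exp[of 0]] by simp
qed


section \<open>Expansion of exp (-2 i d)\<close>

text \<open>The last factor in the definition of d, divided by -sinh (2 pi nu)^2.\<close>
definition d_bracket :: "real \<Rightarrow> real" where
  "d_bracket \<nu> = - (1/2 * (exp (2*pi*\<nu>) * pp \<nu> - pp \<nu>) * sinh (2*pi*\<nu>)
     + (cos (2*pi*mu \<nu>) + 1) * (exp (2*pi*\<nu>) + 1)) / (sinh (2*pi*\<nu>))^2"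

lemma d_bracket_pp_part:
  "((\<lambda>\<nu>. (- (1/2 * (exp (2*pi*\<nu>) * pp \<nu> - pp \<nu>) * sinh (2*pi*\<nu>)) / (sinh (2*pi*\<nu>))^2 - 1) / \<nu>)
     \<longlongrightarrow> pi) (at_right 0)"
proof -
  have "((\<lambda>\<nu>. ((exp (2*pi*\<nu>) - 1) * cosh (2*pi*\<nu>) / sinh (2*pi*\<nu>) - 1) / \<nu>) \<longlongrightarrow> pi) (at_right 0)"
    by real_asymp
  then show ?thesis
  proof (rule Lim_transform_eventually)
    show "\<forall>\<^sub>F \<nu> in at_right 0. ((exp (2*pi*\<nu>) - 1) * cosh (2*pi*\<nu>) / sinh (2*pi*\<nu>) - 1) / \<nu>
      = (- (1/2 * (exp (2*pi*\<nu>) * pp \<nu> - pp \<nu>) * sinh (2*pi*\<nu>)) / (sinh (2*pi*\<nu>))^2 - 1) / \<nu>"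
      using eventually_at_right_less
    proof eventually_elim
      case (elim \<nu>)
      then have "sinh (2*pi*\<nu>) \<noteq> 0"
        by (simp add: sinh_zero_iff)
      then show ?case
        by (simp add: pp_def field_simps power2_eq_square)
    qed
  qed
qed

text \<open>
  Since 2 pi mu = 2 pi eps - pi, the factor cos (2 pi mu) + 1 is O(eps^2) = O(nu^4), which beats
  the nu^(-3) coming from the division by sinh^2 and by nu.
\<close>
lemma d_bracket_cos_part:
  "((\<lambda>\<nu>. (cos (2*pi*mu \<nu>) + 1) * (exp (2*pi*\<nu>) + 1) / (sinh (2*pi*\<nu>))^2 / \<nu>) \<longlongrightarrow> 0) (at_right 0)"
proof (rule Lim_null_comparison)
  define bound where "bound \<nu> = 2*pi^2 * (mu_offset \<nu> / \<nu>^2)^2 * (\<nu>^3 * (exp (2*pi*\<nu>) + 1) / (sinh (2*pi*\<nu>))^2)"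
    for \<nu> :: real
  have "((\<lambda>\<nu>. \<nu>^3 * (exp (2*pi*\<nu>) + 1) / (sinh (2*pi*\<nu>))^2) \<longlongrightarrow> 0) (at_right 0)"
    unfolding cosh_sinh_real_exp by real_asymp
  then have "(bound \<longlongrightarrow> 2*pi^2 * (- (sqrt 3 * pi / 2))^2 * 0) (at_right 0)"
    unfolding bound_def by (intro tendsto_intros mu_offset_asymp)
  then show "(bound \<longlongrightarrow> 0) (at_right 0)"
    by (simp only: mult_zero_right)
  show "\<forall>\<^sub>F \<nu> in at_right 0.
      norm ((cos (2*pi*mu \<nu>) + 1) * (exp (2*pi*\<nu>) + 1) / (sinh (2*pi*\<nu>))^2 / \<nu>) \<le> bound \<nu>"
    using eventually_at_right_less
  proof eventually_elim
    case (elim \<nu>)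
    define K where "K = (exp (2*pi*\<nu>) + 1) / (sinh (2*pi*\<nu>))^2 / \<nu>"
    have K_nonneg: "K \<ge> 0"
      using elim by (simp add: K_def add_pos_pos)
    have "2*pi*mu \<nu> = 2*pi*mu_offset \<nu> - pi"
      by (simp add: mu_offset_def algebra_simps)
    then have "cos (2*pi*mu \<nu>) + 1 = 1 - cos (2*pi*mu_offset \<nu>)"
      by (simp add: cos_diff)
    then have "norm ((cos (2*pi*mu \<nu>) + 1) * (exp (2*pi*\<nu>) + 1) / (sinh (2*pi*\<nu>))^2 / \<nu>)
        = \<bar>1 - cos (2*pi*mu_offset \<nu>)\<bar> * K"
      using K_nonneg elim by (simp add: K_def abs_mult)
    also have "\<dots> \<le> 2*pi^2 * (mu_offset \<nu>)^2 * K"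
      using abs_one_minus_cos_le[of "2*pi*mu_offset \<nu>"] K_nonneg
      by (intro mult_right_mono) (simp_all add: power2_eq_square)
    also have "\<dots> = bound \<nu>"
      using elim by (simp add: bound_def K_def field_simps power2_eq_square eval_nat_numeral)
    finally show ?case .
  qed
qed

lemma d_bracket_expands: "expands_from_one (\<lambda>\<nu>. complex_of_real (d_bracket \<nu>)) (complex_of_real pi)"
proof (rule expands_from_one_of_real)
  have "((\<lambda>\<nu>. (- (1/2 * (exp (2*pi*\<nu>) * pp \<nu> - pp \<nu>) * sinh (2*pi*\<nu>)) / (sinh (2*pi*\<nu>))^2 - 1) / \<nu>
      - (cos (2*pi*mu \<nu>) + 1) * (exp (2*pi*\<nu>) + 1) / (sinh (2*pi*\<nu>))^2 / \<nu>) \<longlongrightarrow> pi - 0) (at_right 0)"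
    by (intro tendsto_intros d_bracket_pp_part d_bracket_cos_part)
  moreover have "(- (1/2 * (exp (2*pi*\<nu>) * pp \<nu> - pp \<nu>) * sinh (2*pi*\<nu>)) / (sinh (2*pi*\<nu>))^2 - 1) / \<nu>
      - (cos (2*pi*mu \<nu>) + 1) * (exp (2*pi*\<nu>) + 1) / (sinh (2*pi*\<nu>))^2 / \<nu> = (d_bracket \<nu> - 1) / \<nu>"
    for \<nu>
    by (simp add: d_bracket_def diff_divide_distrib add_divide_distrib)
  ultimately show "((\<lambda>\<nu>. (d_bracket \<nu> - 1) / \<nu>) \<longlongrightarrow> pi) (at_right 0)"
    by simp
qed

lemma one_plus_i_mu_offset_expands:
  "expands_from_one (\<lambda>\<nu>. 1 + \<i> * complex_of_real (mu_offset \<nu> / \<nu>)) (- \<i> * complex_of_real (sqrt 3 * pi / 2))"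
  unfolding expands_from_one_def
proof (rule Lim_transform_eventually)
  show "((\<lambda>\<nu>. \<i> * complex_of_real (mu_offset \<nu> / \<nu>^2)) \<longlongrightarrow> - \<i> * complex_of_real (sqrt 3 * pi / 2))
      (at_right 0)"
    using tendsto_mult[OF tendsto_const[of \<i>] tendsto_of_real[OF mu_offset_asymp]] by simp
qed (simp add: power2_eq_square)

text \<open>
  The Gamma arguments of d, shifted by one: for s = -1, 1, 0 these are
  1/2 - mu - i nu, mu + 1/2 - i nu and -i nu.
\<close>
definition gamma_shift :: "real \<Rightarrow> real \<Rightarrow> complex" where
  "gamma_shift s \<nu> = complex_of_real (s * mu_offset \<nu>) - \<i> * complex_of_real \<nu>"

lemma Gamma_gamma_shift_expands:
  "expands_from_one (\<lambda>\<nu>. Gamma (1 + gamma_shift s \<nu>)) (Digamma 1 * - \<i>)"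
proof (rule expands_from_one_comp[where h = "\<lambda>z. Gamma (1 + z)"])
  show "((\<lambda>z. Gamma (1 + z)) has_field_derivative Digamma 1) (at 0)"
    by (auto intro!: derivative_eq_intros)
  have "((\<lambda>\<nu>. complex_of_real (s * (mu_offset \<nu> / \<nu>)) - \<i>) \<longlongrightarrow> complex_of_real (s * 0) - \<i>)
      (at_right 0)"
    by (intro tendsto_intros mu_offset_over_nu_tendsto_0)
  then have "((\<lambda>\<nu>. complex_of_real (s * (mu_offset \<nu> / \<nu>)) - \<i>) \<longlongrightarrow> - \<i>) (at_right 0)"
    by (simp only: mult_zero_right of_real_0 diff_0)
  then show "((\<lambda>\<nu>. gamma_shift s \<nu> / complex_of_real \<nu>) \<longlongrightarrow> - \<i>) (at_right 0)"
    by (rule Lim_transform_eventually)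
      (use eventually_at_right_less in \<open>eventually_elim, simp add: gamma_shift_def field_simps\<close>)
qed simp

definition gamma_quotient :: "real \<Rightarrow> complex" where
  "gamma_quotient \<nu> = Gamma (1 + gamma_shift (-1) \<nu>) * Gamma (1 + gamma_shift 1 \<nu>)
     * inverse ((Gamma (1 + gamma_shift 0 \<nu>))^2)"

lemma gamma_quotient_expands: "expands_from_one gamma_quotient 0"
proof -
  have "expands_from_one gamma_quotient
      (Digamma 1 * - \<i> + Digamma 1 * - \<i> + - (2 * (Digamma 1 * - \<i>)))"
    unfolding gamma_quotient_def
    by (intro expands_from_one_mult expands_from_one_inverse expands_from_one_power2
        Gamma_gamma_shift_expands)
  then show ?thesis
    by simp
qed

text \<open>The argument of the logarithm in the definition of d, so that exp (-2 i d) = Z.\<close>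
definition Z :: "real \<Rightarrow> complex" where
  "Z \<nu> = (let m = complex_of_real (mu \<nu>); v = complex_of_real \<nu> in
       - (4 * exp (2*\<i> * v * Ln (16::complex)) * Gamma (3/2 - m - \<i> * v)^2 * Gamma (m + 1/2 - \<i> * v)^2)
         / ((2* v + \<i> * (1 - 2*m))^2 * v^2 * complex_of_real (sinh (2*pi*\<nu>))^2 * Gamma (- \<i> * v)^4)
       * complex_of_real (1/2 * (exp (2*pi*\<nu>) * pp \<nu> - pp \<nu>) * sinh (2*pi*\<nu>)
            + (cos (2*pi*mu \<nu>) + 1) * (exp (2*pi*\<nu>) + 1)))"

lemma dconst_eq_Ln_Z: "dconst \<nu> = \<i>/2 * Ln (Z \<nu>)"
  by (simp add: dconst_def Z_def Let_def)

lemma Z_field_identity: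
  fixes E G1 G2 G3 W w u S Q :: complex
  assumes "W \<noteq> 0" "w \<noteq> 0" "u \<noteq> 0" "S \<noteq> 0" "G3 \<noteq> 0"
  shows "- (4*E*(W*G1)^2*(G2/w)^2) / ((2*\<i>*W)^2 * u^2 * S^2 * (G3/(-\<i>*u))^4) * (-Q*S^2)
    = E * (G1*G2*inverse (G3^2))^2 * Q * inverse ((\<i>*w/u)^2)"
proof -
  have "(2*\<i>*W)^2 = -4*W^2" "(G3/(-\<i>*u))^4 = G3^4/u^4" "(\<i>*w/u)^2 = - (w^2/u^2)"
    by (simp_all add: power_mult_distrib power_divide)
  then show ?thesis
    using assms by (simp add: field_simps power2_eq_square eval_nat_numeral)
qed

lemma Z_factorization:
  assumes "\<nu> > 0"
  shows "Z \<nu> = exp (2*\<i> * complex_of_real \<nu> * Ln 16) * (gamma_quotient \<nu>)^2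
    * complex_of_real (d_bracket \<nu>) * inverse ((1 + \<i> * complex_of_real (mu_offset \<nu> / \<nu>))^2)"
proof -
  define u where "u = complex_of_real \<nu>"
  define S where "S = complex_of_real (sinh (2*pi*\<nu>))"
  define w1 where "w1 = gamma_shift (-1) \<nu>"
  define w2 where "w2 = gamma_shift 1 \<nu>"
  define w3 where "w3 = gamma_shift 0 \<nu>"
  have mu: "complex_of_real (mu \<nu>) = complex_of_real (mu_offset \<nu>) - 1/2"
    by (simp add: mu_offset_def)
  have u0: "u \<noteq> 0" and S0: "S \<noteq> 0"
    using assms by (simp_all add: u_def S_def sinh_zero_iff)
  have w1n: "1 + w1 \<notin> \<int>\<^sub>\<le>\<^sub>0" and w2n: "w2 \<notin> \<int>\<^sub>\<le>\<^sub>0" and w3n: "w3 \<notin> \<int>\<^sub>\<le>\<^sub>0"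
    using assms by (simp_all add: not_nonpos_Int_if_Im_nonzero w1_def w2_def w3_def gamma_shift_def)
  then have nz: "1 + w1 \<noteq> 0" "w2 \<noteq> 0" "w3 \<noteq> 0" "Gamma (1 + w3) \<noteq> 0"
    using assms by (auto simp: Gamma_eq_zero_iff not_nonpos_Int_if_Im_nonzero w3_def gamma_shift_def)
  have "3/2 - complex_of_real (mu \<nu>) - \<i> * u = (1 + w1) + 1"
    by (simp add: mu w1_def gamma_shift_def u_def)
  then have g1: "Gamma (3/2 - complex_of_real (mu \<nu>) - \<i> * u) = (1 + w1) * Gamma (1 + w1)"
    using Gamma_plus1[OF w1n] by simp
  have "complex_of_real (mu \<nu>) + 1/2 - \<i> * u = w2"
    by (simp add: mu w2_def gamma_shift_def u_def)
  then have g2: "Gamma (complex_of_real (mu \<nu>) + 1/2 - \<i> * u) = Gamma (1 + w2) / w2"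
    using Gamma_plus1[OF w2n] nz by (simp add: add.commute)
  have "- \<i> * u = w3"
    by (simp add: w3_def gamma_shift_def u_def)
  then have g3: "Gamma (- \<i> * u) = Gamma (1 + w3) / (- \<i> * u)"
    using Gamma_plus1[OF w3n] nz by (simp add: add.commute)
  have lin: "2 * u + \<i> * (1 - 2 * complex_of_real (mu \<nu>)) = 2 * \<i> * (1 + w1)"
    by (simp add: mu w1_def gamma_shift_def u_def algebra_simps)
  have bracket: "complex_of_real (1/2 * (exp (2*pi*\<nu>) * pp \<nu> - pp \<nu>) * sinh (2*pi*\<nu>)
      + (cos (2*pi*mu \<nu>) + 1) * (exp (2*pi*\<nu>) + 1)) = - complex_of_real (d_bracket \<nu>) * S^2"
    using S0 by (simp add: d_bracket_def S_def field_simps)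
  have "Z \<nu> = - (4 * exp (2*\<i> * complex_of_real \<nu> * Ln 16) * ((1 + w1) * Gamma (1 + w1))^2
         * (Gamma (1 + w2) / w2)^2)
         / ((2 * \<i> * (1 + w1))^2 * u^2 * S^2 * (Gamma (1 + w3) / (- \<i> * u))^4)
       * (- complex_of_real (d_bracket \<nu>) * S^2)"
    unfolding Z_def Let_def u_def[symmetric] S_def[symmetric] g1 g2 g3 lin bracket
    by (simp add: u_def)
  also have "\<dots> = exp (2*\<i> * complex_of_real \<nu> * Ln 16) * (gamma_quotient \<nu>)^2
      * complex_of_real (d_bracket \<nu>) * inverse ((\<i> * w2 / u)^2)"
    unfolding gamma_quotient_def w1_def[symmetric] w2_def[symmetric] w3_def[symmetric]
    by (rule Z_field_identity) (use nz u0 S0 in auto)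
  also have "\<i> * w2 / u = 1 + \<i> * complex_of_real (mu_offset \<nu> / \<nu>)"
    using u0 by (simp add: w2_def gamma_shift_def u_def field_simps)
  finally show ?thesis .
qed

lemma Z_expands: "expands_from_one Z (-2 * \<i> * d1)"
proof -
  have expansion: "expands_from_one
      (\<lambda>\<nu>. exp (2*\<i> * complex_of_real \<nu> * Ln 16) * (gamma_quotient \<nu>)^2
        * complex_of_real (d_bracket \<nu>) * inverse ((1 + \<i> * complex_of_real (mu_offset \<nu> / \<nu>))^2))
      (2*\<i> * Ln 16 + 2 * 0 + complex_of_real pi + - (2 * (- \<i> * complex_of_real (sqrt 3 * pi / 2))))"
    by (intro expands_from_one_mult expands_from_one_inverse expands_from_one_power2
        expands_from_one_exp_linear gamma_quotient_expands d_bracket_expands one_plus_i_mu_offset_expands)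
  have "ln (16::real) = 4 * ln 2"
    using ln_realpow[of 2 4] by simp
  then have "Ln (16::complex) = 4 * Ln 2"
    using Ln_of_real[of 16] Ln_of_real[of 2] by simp
  then have slope: "2*\<i> * Ln 16 + 2 * 0 + complex_of_real pi + - (2 * (- \<i> * complex_of_real (sqrt 3 * pi / 2)))
      = -2 * \<i> * d1"
    by (simp add: d1_def algebra_simps)
  show ?thesis
    by (rule expands_from_one_cong[OF expansion _ slope])
      (use eventually_at_right_less in \<open>eventually_elim, simp add: Z_factorization\<close>)
qed


section \<open>The limit of y1\<close>

lemma y1_form_eq_one_plus_square:
  fixes W m u :: complex
  assumes "W \<noteq> 0" "u \<noteq> 0"
  shows "(2*m - 1 + 2*\<i>*u)^2 / (16*u^2) * W - ((2*m - 1)^2 - 4*u^2) / (8*u^2)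
      + (2*m - 1 - 2*\<i>*u)^2 / (16*u^2) * inverse W
    = 1 + (((2*m - 1 + 2*\<i>*u) * W - (2*m - 1 - 2*\<i>*u)) / u)^2 / (16*W)"
  using assms by (simp add: field_simps power2_eq_square)

lemma y1_eq_one_plus_square:
  assumes "\<nu> > 0" "Z \<nu> \<noteq> 0"
  shows "y1 \<nu> x = 1 + (((2 * complex_of_real (mu \<nu>) - 1 + 2*\<i> * complex_of_real \<nu>)
      * (Z \<nu> * exp (-2*\<i> * complex_of_real \<nu> * Ln x))
      - (2 * complex_of_real (mu \<nu>) - 1 - 2*\<i> * complex_of_real \<nu>)) / complex_of_real \<nu>)^2
      / (16 * (Z \<nu> * exp (-2*\<i> * complex_of_real \<nu> * Ln x)))"
proof -
  have e1: "exp (-2*\<i> * dconst \<nu>) = Z \<nu>"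
    using assms(2) by (simp add: dconst_eq_Ln_Z)
  have e2: "exp (2*\<i> * dconst \<nu>) = inverse (Z \<nu>)"
  proof -
    have "2*\<i> * dconst \<nu> = - Ln (Z \<nu>)"
      by (simp add: dconst_eq_Ln_Z)
    then show ?thesis
      using assms(2) by (simp add: exp_minus)
  qed
  have e3: "exp (2*\<i> * complex_of_real \<nu> * Ln x) = inverse (exp (-2*\<i> * complex_of_real \<nu> * Ln x))"
    by (simp add: exp_minus[symmetric])
  show ?thesis
    unfolding y1_def Let_def e1 e2 e3
    using y1_form_eq_one_plus_square[OF no_zero_divisors[OF assms(2) exp_not_eq_zero],
        where u = "complex_of_real \<nu>" and m = "complex_of_real (mu \<nu>)"] assms(1)
    by (simp add: mult.assoc)
qed

lemma y1_tendsto_P1: "((\<lambda>\<nu>. y1 \<nu> x) \<longlongrightarrow> P1 x) (at_right 0)"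
proof -
  define E where "E \<nu> = Z \<nu> * exp (-2*\<i> * complex_of_real \<nu> * Ln x)" for \<nu>
  define p where "p \<nu> = 2 * complex_of_real (mu \<nu>) - 1 + 2*\<i> * complex_of_real \<nu>" for \<nu>
  define slope where "slope = -2*\<i> * d1 + -2*\<i> * Ln x"
  have E: "expands_from_one E slope"
    unfolding E_def slope_def by (intro expands_from_one_mult Z_expands expands_from_one_exp_linear)
  have "(p \<longlongrightarrow> 2 * complex_of_real (-1/2) - 1 + 2*\<i> * 0) (at_right 0)"
    unfolding p_def by (intro tendsto_intros mu_tendsto of_real_tendsto_0_at_right)
  then have "((\<lambda>\<nu>. 1 + (p \<nu> * ((E \<nu> - 1) / complex_of_real \<nu>) + 4*\<i>)^2 / (16 * E \<nu>))
      \<longlongrightarrow> 1 + ((2 * complex_of_real (-1/2) - 1 + 2*\<i> * 0) * slope + 4*\<i>)^2 / (16 * 1)) (at_right 0)"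
    using E expands_from_one_tendsto[OF E] unfolding expands_from_one_def
    by (intro tendsto_intros) auto
  moreover have "1 + ((2 * complex_of_real (-1/2) - 1 + 2*\<i> * 0) * (-2*\<i> * D + -2*\<i> * L) + 4*\<i>)^2 / (16 * 1)
      = - (L + D + 2) * (L + D)" for D L :: complex
    by (simp add: field_simps power2_eq_square)
  ultimately have lim: "((\<lambda>\<nu>. 1 + (p \<nu> * ((E \<nu> - 1) / complex_of_real \<nu>) + 4*\<i>)^2 / (16 * E \<nu>))
      \<longlongrightarrow> P1 x) (at_right 0)"
    by (simp add: slope_def P1_def)
  have "\<forall>\<^sub>F \<nu> in at_right 0. 1 + (p \<nu> * ((E \<nu> - 1) / complex_of_real \<nu>) + 4*\<i>)^2 / (16 * E \<nu>)
      = y1 \<nu> x"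
    using eventually_at_right_less expands_from_one_eventually_nonzero[OF Z_expands]
  proof eventually_elim
    case (elim \<nu>)
    then have "p \<nu> * ((E \<nu> - 1) / complex_of_real \<nu>) + 4*\<i>
        = (p \<nu> * E \<nu> - (2 * complex_of_real (mu \<nu>) - 1 - 2*\<i> * complex_of_real \<nu>)) / complex_of_real \<nu>"
      by (simp add: p_def field_simps)
    then show ?case
      using y1_eq_one_plus_square[OF elim, of x] by (simp add: E_def p_def)
  qed
  with lim show ?thesis
    by (rule Lim_transform_eventually)
qed

theorem proposition13:
  shows "(mu \<longlongrightarrow> -1/2) (at_right 0) \<and>
    (\<forall>x::complex. x \<noteq> 0 \<and> \<bar>Arg x\<bar> < pi \<longrightarrow>
       ((\<lambda>\<nu>. y1 \<nu> x) \<longlongrightarrow> P1 x) (at_right 0))"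
  using mu_tendsto y1_tendsto_P1 by blast

end
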